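(* Let $n$ and $k$ be integers with $3\le k\le n-1$, and let $CT\in\mathcal{CT}_{n,k}$. Then \[ M_1(CT)\le\begin{cases}4n+2k-10 & \text{if } k\equiv 0 \pmod 3,\\ 4n+2k-8 & \text{if } k\equiv 1 \pmod 3,\\ 4n+2k-12 & \text{if } k\equiv 2 \pmod 3.\end{cases} \] Equality holds if and only if $CT$ contains exactly one vertex of degree $3$ when $k\equiv 0 \pmod 3$, no vertex of degree $3$ when $k\equiv 1\pmod 3$, and exactly two vertices of degree $3$ when $k\equiv 2\pmod 3$.
   Context: All graphs are simple and connected. A chemical tree is a tree with maximum degree at most $4$. $d_v$ denotes the degree of a vertex $v$. A vertex of degree $1$ is pendent; a vertex of degree greater than $2$ is branching. A segment of a tree $T$ is a path of positive length in $T$ neither of whose end vertices has degree $2$ and all of whose internal vertices (if any) have degree $2$. $\mathcal{CT}_{n,k}$ denotes the class of all $n$-vertex chemical trees having exactly $k$ segments. The first Zagreb index is $M_1(G)=\sum_{v\in V(G)}d_v^2$. *)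

theory Defs
  imports Main
begin

definition simple_graph :: "'a set \<Rightarrow> 'a set set \<Rightarrow> bool" where
  "simple_graph V E \<longleftrightarrow> finite V \<and>
     (\<forall>e\<in>E. \<exists>u v. e = {u, v} \<and> u \<noteq> v \<and> u \<in> V \<and> v \<in> V)"

definition adj :: "'a set set \<Rightarrow> 'a \<Rightarrow> 'a \<Rightarrow> bool" where
  "adj E u v \<longleftrightarrow> {u, v} \<in> E"

definition degree :: "'a set set \<Rightarrow> 'a \<Rightarrow> nat" where
  "degree E v = card {e \<in> E. v \<in> e}"

definition is_walk :: "'a set \<Rightarrow> 'a set set \<Rightarrow> 'a list \<Rightarrow> bool" where
  "is_walk V E vs \<longleftrightarrow> vs \<noteq> [] \<and> set vs \<subseteq> V \<and>
     (\<forall>i. Suc i < length vs \<longrightarrow> adj E (vs ! i) (vs ! Suc i))"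

definition is_path :: "'a set \<Rightarrow> 'a set set \<Rightarrow> 'a list \<Rightarrow> bool" where
  "is_path V E vs \<longleftrightarrow> is_walk V E vs \<and> distinct vs"

definition connected_graph :: "'a set \<Rightarrow> 'a set set \<Rightarrow> bool" where
  "connected_graph V E \<longleftrightarrow>
     (\<forall>u\<in>V. \<forall>v\<in>V. \<exists>vs. is_walk V E vs \<and> hd vs = u \<and> last vs = v)"

definition is_cycle :: "'a set \<Rightarrow> 'a set set \<Rightarrow> 'a list \<Rightarrow> bool" where
  "is_cycle V E vs \<longleftrightarrow> is_path V E vs \<and> length vs \<ge> 3 \<and> adj E (last vs) (hd vs)"

definition is_tree :: "'a set \<Rightarrow> 'a set set \<Rightarrow> bool" where
  "is_tree V E \<longleftrightarrow> simple_graph V E \<and> V \<noteq> {} \<and> connected_graph V E \<and>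
     (\<nexists>vs. is_cycle V E vs)"

definition chemical_tree :: "'a set \<Rightarrow> 'a set set \<Rightarrow> bool" where
  "chemical_tree V E \<longleftrightarrow> is_tree V E \<and> (\<forall>v\<in>V. degree E v \<le> 4)"

definition path_edges :: "'a list \<Rightarrow> 'a set set" where
  "path_edges vs = {{vs ! i, vs ! Suc i} | i. Suc i < length vs}"

definition is_segment :: "'a set \<Rightarrow> 'a set set \<Rightarrow> 'a list \<Rightarrow> bool" where
  "is_segment V E vs \<longleftrightarrow> is_path V E vs \<and> length vs \<ge> 2 \<and>
     degree E (hd vs) \<noteq> 2 \<and> degree E (last vs) \<noteq> 2 \<and>
     (\<forall>i. 0 < i \<and> Suc i < length vs \<longrightarrow> degree E (vs ! i) = 2)"

text \<open>Segments are counted as subgraphs (a path and its reversal are the same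
  segment); a path of positive length is determined by its edge set.\<close>

definition segments :: "'a set \<Rightarrow> 'a set set \<Rightarrow> 'a set set set" where
  "segments V E = {path_edges vs | vs. is_segment V E vs}"

definition num_segments :: "'a set \<Rightarrow> 'a set set \<Rightarrow> nat" where
  "num_segments V E = card (segments V E)"

definition M1 :: "'a set \<Rightarrow> 'a set set \<Rightarrow> nat" where
  "M1 V E = (\<Sum>v\<in>V. (degree E v)^2)"

end

theory Submission
  imports Defs
begin

(* In a tree on n vertices the degrees sum to 2(n - 1).  Reading a segment from one of its
   two ends gives a vertex of degree other than 2 together with an edge at it; conversely such a
   pair determines the segment, because a path can only continue through a vertex of degree 2
   in one way.  Hence 2k is the sum of all degrees different from 2.  With all degrees in
   {1, ..., 4} the two identities give k = 2 n_3 + 3 n_4 + 1 and M_1 = 4n + 2k - 8 - 2 n_3,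
   where n_i is the number of vertices of degree i.  So n_3 is congruent to 2(k - 1) modulo 3,
   and M_1 is maximal exactly when n_3 is the least natural number in this residue class. *)

lemma simple_graph_finite_edges:
  assumes "simple_graph V E"
  shows "finite E"
proof -
  have "E \<subseteq> Pow V" using assms unfolding simple_graph_def by auto
  then show ?thesis using assms unfolding simple_graph_def by (meson finite_Pow_iff finite_subset)
qed

lemma simple_graph_edgeD:
  assumes "simple_graph V E" "{a, b} \<in> E"
  shows "a \<noteq> b" "a \<in> V" "b \<in> V"
  using assms unfolding simple_graph_def by (metis doubleton_eq_iff)+

lemma simple_graph_incident_edgeE:
  assumes "simple_graph V E" "e \<in> E" "x \<in> e"
  obtains y where "e = {x, y}" "y \<noteq> x"
  using assms unfolding simple_graph_def by (metis insert_commute insertE singletonD)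

lemma is_treeD:
  assumes "is_tree V E"
  shows "simple_graph V E" "finite V" "finite E" "connected_graph V E" "\<not> is_cycle V E vs"
  using assms simple_graph_finite_edges unfolding is_tree_def simple_graph_def by blast+

lemma degree_sum:
  assumes sg: "simple_graph V E"
  shows "(\<Sum>v\<in>V. degree E v) = 2 * card E"
proof -
  have "(\<Sum>v\<in>V. degree E v) = (\<Sum>v\<in>V. \<Sum>e\<in>{e. e \<in> E \<and> v \<in> e}. 1)"
    by (simp add: degree_def)
  also have "\<dots> = (\<Sum>e\<in>E. \<Sum>v\<in>{v. v \<in> V \<and> v \<in> e}. 1)"
    using sg simple_graph_finite_edges[OF sg] unfolding simple_graph_def by (intro sum.swap_restrict) auto
  also have "\<dots> = (\<Sum>e\<in>E. 2)"
  proof (rule sum.cong[OF refl])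
    fix e assume "e \<in> E"
    then obtain a b where "e = {a, b}" "a \<noteq> b" "a \<in> V" "b \<in> V"
      using sg unfolding simple_graph_def by blast
    then have "{v. v \<in> V \<and> v \<in> e} = {a, b}" by auto
    then show "(\<Sum>v\<in>{v. v \<in> V \<and> v \<in> e}. 1) = (2::nat)" using \<open>a \<noteq> b\<close> by simp
  qed
  finally show ?thesis by simp
qed

section \<open>Walks and paths\<close>

lemma adj_commute: "adj E u v \<longleftrightarrow> adj E v u"
  unfolding adj_def by (simp add: insert_commute)

lemma is_walk_iff_successively:
  "is_walk V E vs \<longleftrightarrow> vs \<noteq> [] \<and> set vs \<subseteq> V \<and> successively (adj E) vs"
  unfolding is_walk_def successively_conv_nth by blast

lemma successively_take_drop:
  assumes "successively P xs"
  shows "successively P (take i xs)" "successively P (drop i xs)"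
  using assms successively_append_iff[of P "take i xs" "drop i xs"] by simp_all

lemma walk_shortcut:
  assumes w: "is_walk V E vs" and ij: "i < j" "j < length vs" "vs ! i = vs ! j"
  shows "is_walk V E (take i vs @ drop j vs)"
proof -
  have s: "successively (adj E) vs" using w by (simp add: is_walk_iff_successively)
  have "adj E (last (take i vs)) (vs ! j)" if "0 < i"
  proof -
    have "last (take i vs) = vs ! (i - 1)" using that ij by (subst last_conv_nth) auto
    then show ?thesis using successively_nth[OF s, of "i - 1"] that ij by simp
  qed
  then have "successively (adj E) (take i vs @ drop j vs)"
    using successively_take_drop[OF s] ij
    by (auto simp: successively_append_iff hd_drop_conv_nth)
  moreover have "set (take i vs @ drop j vs) \<subseteq> V"
    using w set_take_subset set_drop_subset unfolding is_walk_def by fastforce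
  ultimately show ?thesis using ij by (simp add: is_walk_iff_successively)
qed

lemma walk_to_path:
  assumes "is_walk V E vs"
  obtains ps where "is_path V E ps" "hd ps = hd vs" "last ps = last vs"
  using assms
proof (induction "length vs" arbitrary: vs rule: less_induct)
  case less
  show ?case
  proof (cases "distinct vs")
    case True
    then show ?thesis using less.prems unfolding is_path_def by blast
  next
    case False
    then obtain i j where ij: "i < j" "j < length vs" "vs ! i = vs ! j"
      by (metis distinct_conv_nth linorder_neqE_nat)
    define ws where "ws = take i vs @ drop j vs"
    have "vs \<noteq> []" using ij by auto
    then have "hd ws = hd vs"
      using ij by (cases "i = 0") (simp_all add: ws_def hd_append hd_drop_conv_nth hd_conv_nth)
    moreover have "last ws = last vs" using ij by (simp add: ws_def)
    moreover have "length ws < length vs" using ij by (simp add: ws_def)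
    ultimately show ?thesis
      using less.hyps less.prems walk_shortcut[OF less.prems(2) ij] unfolding ws_def by metis
  qed
qed

lemma path_snoc:
  assumes "is_path V E vs" "adj E (last vs) u" "u \<in> V" "u \<notin> set vs"
  shows "is_path V E (vs @ [u])"
  using assms by (auto simp: is_path_def is_walk_iff_successively successively_append_iff)

lemma path_drop_cycle:
  assumes p: "is_path V E vs" and j: "j + 2 < length vs" and a: "adj E (last vs) (vs ! j)"
  shows "is_cycle V E (drop j vs)"
proof -
  have "is_walk V E (drop j vs)"
    using p j successively_take_drop(2) set_drop_subset
    by (fastforce simp: is_path_def is_walk_iff_successively)
  then show ?thesis
    using p j a by (simp add: is_cycle_def is_path_def hd_drop_conv_nth)
qed

lemma path_length_le_card:
  assumes "finite V" "is_path V E vs"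
  shows "length vs \<le> card V"
  using assms by (metis card_mono distinct_card is_path_def is_walk_def)

lemma longest_path_exists:
  assumes "finite V" "is_path V E vs\<^sub>0" "P vs\<^sub>0"
  obtains vs where "is_path V E vs" "P vs"
    "\<And>ws. is_path V E ws \<Longrightarrow> P ws \<Longrightarrow> length ws \<le> length vs"
proof -
  have "\<forall>ws. is_path V E ws \<and> P ws \<longrightarrow> length ws < Suc (card V)"
    using path_length_le_card[OF assms(1)] le_imp_less_Suc by blast
  then show ?thesis
    using ex_has_greatest_nat[of "\<lambda>ws. is_path V E ws \<and> P ws" vs\<^sub>0 length] assms that by blast
qed

lemma path_last_edge:
  assumes "is_path V E vs" "2 \<le> length vs"
  shows "{vs ! (length vs - 2), last vs} \<in> E"
proof -
  have "adj E (vs ! (length vs - 2)) (vs ! Suc (length vs - 2))"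
    using assms successively_nth[of "adj E" vs "length vs - 2"]
    by (simp add: is_path_def is_walk_iff_successively)
  moreover have "Suc (length vs - 2) = length vs - 1" "vs \<noteq> []" using assms(2) by auto
  ultimately show ?thesis by (simp add: adj_def last_conv_nth)
qed

lemma edge_path:
  assumes "simple_graph V E" "{a, b} \<in> E"
  shows "is_path V E [a, b]"
  using assms simple_graph_edgeD[OF assms]
  by (simp add: is_path_def is_walk_iff_successively adj_def)

lemma connected_graph_incident_edge:
  assumes "connected_graph V E" "x \<in> V" "y \<in> V" "x \<noteq> y"
  obtains z where "{x, z} \<in> E"
proof -
  obtain ws where ws: "is_walk V E ws" "hd ws = x" "last ws = y"
    using assms unfolding connected_graph_def by blast
  have "ws \<noteq> []" using ws(1) by (simp add: is_walk_def)
  then obtain ws' where ws': "ws = x # ws'" using ws(2) by (cases ws) auto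
  then have "ws' \<noteq> []" using ws(3) assms(4) by auto
  then have "adj E x (hd ws')" using ws(1) ws' by (simp add: is_walk_iff_successively successively_Cons)
  then show ?thesis using that by (simp add: adj_def)
qed

lemma cycle_mono:
  assumes "is_cycle V' E' vs" "V' \<subseteq> V" "E' \<subseteq> E"
  shows "is_cycle V E vs"
  using assms unfolding is_cycle_def is_path_def is_walk_def adj_def by blast

section \<open>Trees\<close>

lemma tree_path_snoc:
  assumes t: "is_tree V E" and p: "is_path V E vs" and l: "2 \<le> length vs"
    and e: "{last vs, u} \<in> E" and u: "u \<noteq> vs ! (length vs - 2)"
  shows "is_path V E (vs @ [u])"
proof -
  note sg = is_treeD(1)[OF t]
  have "u \<notin> set vs"
  proof
    assume "u \<in> set vs"
    then obtain j where j: "j < length vs" "vs ! j = u" by (metis in_set_conv_nth)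
    have "vs \<noteq> []" using l by auto
    then have "u \<noteq> vs ! (length vs - 1)"
      using simple_graph_edgeD(1)[OF sg e] by (simp add: last_conv_nth)
    then have "j \<noteq> length vs - 1" "j \<noteq> length vs - 2" using j u by auto
    then have "j + 2 < length vs" using j(1) by linarith
    then have "is_cycle V E (drop j vs)"
      using path_drop_cycle[OF p] e j by (simp add: adj_def)
    then show False using is_treeD(5)[OF t] by blast
  qed
  then show ?thesis using path_snoc[OF p] e simple_graph_edgeD(3)[OF sg e] by (simp add: adj_def)
qed

lemma tree_incident_edge:
  assumes t: "is_tree V E" and c: "2 \<le> card V" and v: "v \<in> V"
  obtains w where "{v, w} \<in> E"
proof -
  have "V - {v} \<noteq> {}" using c card_Diff_singleton[OF v] by force
  then obtain y where "y \<in> V" "v \<noteq> y" by blast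
  with connected_graph_incident_edge[OF is_treeD(4)[OF t] v] show ?thesis using that by blast
qed

lemma tree_degree_pos:
  assumes t: "is_tree V E" and c: "2 \<le> card V" and v: "v \<in> V"
  shows "0 < degree E v"
proof -
  obtain w where "{v, w} \<in> E" using tree_incident_edge[OF assms] by blast
  then show ?thesis using is_treeD(3)[OF t] unfolding degree_def by (auto simp: card_gt_0_iff)
qed

lemma tree_has_leaf:
  assumes t: "is_tree V E" and c: "2 \<le> card V"
  obtains v u where "v \<in> V" "{e \<in> E. v \<in> e} = {{u, v}}"
proof -
  note sg = is_treeD(1)[OF t]
  obtain a where "a \<in> V" using c by (metis card.empty ex_in_conv not_numeral_le_zero)
  then obtain b where "{a, b} \<in> E" by (rule tree_incident_edge[OF t c])
  then obtain vs where p: "is_path V E vs" and l: "2 \<le> length vs"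
    and longest: "\<And>ws. is_path V E ws \<Longrightarrow> 2 \<le> length ws \<Longrightarrow> length ws \<le> length vs"
    using longest_path_exists[OF is_treeD(2)[OF t] edge_path[OF sg], of a b "\<lambda>ws. 2 \<le> length ws"]
    by auto
  define u where "u = vs ! (length vs - 2)"
  have only_edge: "e = {u, last vs}" if e: "e \<in> E" "last vs \<in> e" for e
  proof -
    obtain w where w: "e = {last vs, w}" using simple_graph_incident_edgeE[OF sg e] by blast
    have "w = u"
    proof (rule ccontr)
      assume "w \<noteq> u"
      then have "is_path V E (vs @ [w])" using tree_path_snoc[OF t p l] e w u_def by simp
      then show False using longest[of "vs @ [w]"] l by simp
    qed
    then show ?thesis using w by auto
  qed
  have "last vs \<in> V"
    using p l by (auto simp: is_path_def is_walk_def)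
  moreover have "{e \<in> E. last vs \<in> e} = {{u, last vs}}"
    using only_edge path_last_edge[OF p l] unfolding u_def by blast
  ultimately show ?thesis by (rule that)
qed

lemma path_avoids_leaf:
  assumes p: "is_path V E ps" and leaf: "{e \<in> E. v \<in> e} = {{u, v}}"
    and ends: "hd ps \<noteq> v" "last ps \<noteq> v"
  shows "v \<notin> set ps"
proof
  assume "v \<in> set ps"
  then obtain i where i: "i < length ps" "ps ! i = v" by (metis in_set_conv_nth)
  have ne: "ps \<noteq> []" and dist: "distinct ps" and s: "successively (adj E) ps"
    using p by (auto simp: is_path_def is_walk_iff_successively)
  have "i \<noteq> 0" using i ends(1) ne by (metis hd_conv_nth)
  moreover have "i \<noteq> length ps - 1" using i ends(2) ne by (metis last_conv_nth)
  ultimately have i': "0 < i" "Suc i < length ps" using i(1) by auto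
  have "adj E (ps ! (i - 1)) v" "adj E (ps ! Suc i) v"
    using successively_nth[OF s, of "i - 1"] successively_nth[OF s, of i] i i'
    by (simp_all add: adj_commute)
  then have "{ps ! (i - 1), v} \<in> {e \<in> E. v \<in> e}" "{ps ! Suc i, v} \<in> {e \<in> E. v \<in> e}"
    by (simp_all add: adj_def)
  then have "{ps ! (i - 1), v} = {u, v}" "{ps ! Suc i, v} = {u, v}" by (simp_all add: leaf)
  moreover have "ps ! (i - 1) \<noteq> ps ! i" "ps ! Suc i \<noteq> ps ! i" "ps ! (i - 1) \<noteq> ps ! Suc i"
    using dist i(1) i' by (simp_all add: nth_eq_iff_index_eq)
  ultimately show False using i(2) by (auto simp: doubleton_eq_iff)
qed

lemma tree_remove_leaf:
  assumes t: "is_tree V E" and v: "v \<in> V" and leaf: "{e \<in> E. v \<in> e} = {{u, v}}"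
  shows "is_tree (V - {v}) (E - {{u, v}})"
proof -
  note sg = is_treeD(1)[OF t]
  have u: "u \<noteq> v" "u \<in> V" using simple_graph_edgeD[OF sg, of u v] leaf by auto
  have avoid: "v \<notin> e" if "e \<in> E - {{u, v}}" for e using that leaf by blast
  have "simple_graph (V - {v}) (E - {{u, v}})"
    unfolding simple_graph_def
  proof (intro conjI ballI)
    show "finite (V - {v})" using is_treeD(2)[OF t] by simp
    fix e assume e: "e \<in> E - {{u, v}}"
    then obtain a b where "e = {a, b}" "a \<noteq> b" "a \<in> V" "b \<in> V"
      using sg unfolding simple_graph_def by blast
    with avoid[OF e] show "\<exists>a b. e = {a, b} \<and> a \<noteq> b \<and> a \<in> V - {v} \<and> b \<in> V - {v}" by blast
  qed
  moreover have "connected_graph (V - {v}) (E - {{u, v}})"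
    unfolding connected_graph_def
  proof (intro ballI)
    fix x y assume x: "x \<in> V - {v}" and y: "y \<in> V - {v}"
    obtain ws where ws: "is_walk V E ws" "hd ws = x" "last ws = y"
      using is_treeD(4)[OF t] x y unfolding connected_graph_def by blast
    obtain ps where ps: "is_path V E ps" "hd ps = x" "last ps = y"
      using walk_to_path[OF ws(1)] unfolding ws(2,3) by blast
    have "hd ps \<noteq> v" "last ps \<noteq> v" using ps(2,3) x y by auto
    then have "v \<notin> set ps" by (rule path_avoids_leaf[OF ps(1) leaf])
    have s: "successively (adj E) ps" using ps(1) by (simp add: is_path_def is_walk_iff_successively)
    have "successively (adj (E - {{u, v}})) ps"
    proof (rule successively_mono[OF s])
      fix a b assume "a \<in> set ps" "b \<in> set ps" "adj E a b"
      then show "adj (E - {{u, v}}) a b"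
        using \<open>v \<notin> set ps\<close> by (auto simp: adj_def doubleton_eq_iff)
    qed
    then have "is_walk (V - {v}) (E - {{u, v}}) ps"
      using ps(1) \<open>v \<notin> set ps\<close> by (auto simp: is_walk_iff_successively is_path_def)
    then show "\<exists>ws. is_walk (V - {v}) (E - {{u, v}}) ws \<and> hd ws = x \<and> last ws = y"
      using ps by blast
  qed
  moreover have "\<not> is_cycle (V - {v}) (E - {{u, v}}) cs" for cs
    using cycle_mono[of "V - {v}" "E - {{u, v}}" cs V E] is_treeD(5)[OF t] by blast
  moreover have "V - {v} \<noteq> {}" using u by blast
  ultimately show ?thesis unfolding is_tree_def by blast
qed

lemma tree_card_edges:
  assumes "is_tree V E"
  shows "card E = card V - 1"
  using assms
proof (induction "card V" arbitrary: V E rule: less_induct)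
  case less
  note sg = is_treeD(1)[OF less.prems]
  show ?case
  proof (cases "2 \<le> card V")
    case False
    have "0 < card V"
      using less.prems is_treeD(2)[OF less.prems] by (simp add: is_tree_def card_gt_0_iff)
    then have "card V = 1" using False by linarith
    then obtain a where a: "V = {a}" by (rule card_1_singletonE)
    have "e \<notin> E" for e
    proof
      assume "e \<in> E"
      then obtain x y where "x \<noteq> y" "x \<in> V" "y \<in> V" using sg unfolding simple_graph_def by blast
      then show False using a by blast
    qed
    then have "E = {}" by blast
    then show ?thesis using a by simp
  next
    case True
    then obtain v u where v: "v \<in> V" and leaf: "{e \<in> E. v \<in> e} = {{u, v}}"
      using tree_has_leaf[OF less.prems] by blast
    have "card (E - {{u, v}}) = card (V - {v}) - 1"
      using less.hyps[OF card_Diff1_less[OF is_treeD(2)[OF less.prems] v]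
          tree_remove_leaf[OF less.prems v leaf]] .
    moreover have "{u, v} \<in> E" using leaf by blast
    ultimately have "card E - 1 = card V - 2"
      using v is_treeD(2,3)[OF less.prems] by (simp add: card_Diff_singleton)
    moreover have "0 < card E"
      using \<open>{u, v} \<in> E\<close> is_treeD(3)[OF less.prems] card_gt_0_iff by blast
    ultimately show ?thesis using True by linarith
  qed
qed

section \<open>Segments\<close>

lemma degree_two_third_neighbor:
  assumes "finite E" "degree E x = 2" "{x, a} \<in> E" "{x, b} \<in> E" "{x, c} \<in> E"
    and "a \<noteq> b" "c \<noteq> b"
  shows "c = a"
proof (rule ccontr)
  assume "c \<noteq> a"
  then have "card {{x, a}, {x, b}, {x, c}} = 3"
    using assms(6,7) by (simp add: doubleton_eq_iff)
  moreover have "{{x, a}, {x, b}, {x, c}} \<subseteq> {e \<in> E. x \<in> e}" using assms(3-5) by auto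
  then have "card {{x, a}, {x, b}, {x, c}} \<le> 2"
    using card_mono[of "{e \<in> E. x \<in> e}"] assms(1,2) by (simp add: degree_def)
  ultimately show False by simp
qed

lemma segment_adj:
  assumes "is_segment V E vs" "Suc i < length vs"
  shows "adj E (vs ! i) (vs ! Suc i)"
  using assms by (simp add: is_segment_def is_path_def is_walk_def)

lemma segment_start:
  assumes "is_segment V E vs"
  shows "vs ! 0 \<in> V" "{vs ! 0, vs ! 1} \<in> E" "vs ! 0 \<noteq> vs ! 1" "degree E (vs ! 0) \<noteq> 2"
proof -
  have l: "2 \<le> length vs" and p: "is_path V E vs" using assms by (simp_all add: is_segment_def)
  then have ne: "vs \<noteq> []" by auto
  then show "vs ! 0 \<in> V" using p by (auto simp: is_path_def is_walk_def)
  show "{vs ! 0, vs ! 1} \<in> E" using segment_adj[OF assms, of 0] l by (simp add: adj_def)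
  show "vs ! 0 \<noteq> vs ! 1" using p l ne nth_eq_iff_index_eq[of vs 0 1] by (simp add: is_path_def)
  show "degree E (vs ! 0) \<noteq> 2" using assms ne by (simp add: is_segment_def hd_conv_nth)
qed

lemma segment_end_index:
  assumes "is_segment V E vs" "j < length vs" "degree E (vs ! j) \<noteq> 2"
  shows "j = 0 \<or> j = length vs - 1"
proof -
  have "\<not> (0 < j \<and> Suc j < length vs)" using assms unfolding is_segment_def by blast
  then show ?thesis using assms(2) by linarith
qed

lemma segments_agree:
  assumes fin: "finite E" and s: "is_segment V E vs" "is_segment V E ws"
    and start: "vs ! 0 = ws ! 0" "vs ! 1 = ws ! 1"
    and i: "i < length vs" "i < length ws"
  shows "vs ! i = ws ! i"
proof -
  have "vs ! i = ws ! i \<and> vs ! Suc i = ws ! Suc i" if "Suc i < length vs" "Suc i < length ws" for i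
    using that
  proof (induction i)
    case 0
    then show ?case using start by simp
  next
    case (Suc i)
    then have eq: "vs ! i = ws ! i" "vs ! Suc i = ws ! Suc i" by simp_all
    let ?x = "vs ! Suc i"
    have "degree E ?x = 2" using s(1) Suc.prems by (simp add: is_segment_def)
    moreover have "adj E ?x (vs ! i)" "adj E ?x (vs ! Suc (Suc i))" "adj E ?x (ws ! Suc (Suc i))"
      using segment_adj[OF s(1), of i] segment_adj[OF s(1), of "Suc i"]
        segment_adj[OF s(2), of "Suc i"] Suc.prems eq by (simp_all add: adj_commute)
    moreover have "distinct vs" "distinct ws" using s by (simp_all add: is_segment_def is_path_def)
    then have "vs ! Suc (Suc i) \<noteq> vs ! i" "ws ! Suc (Suc i) \<noteq> ws ! i"
      using Suc.prems by (simp_all add: nth_eq_iff_index_eq)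
    ultimately have "ws ! Suc (Suc i) = vs ! Suc (Suc i)"
      using degree_two_third_neighbor[OF fin] eq(1) unfolding adj_def by metis
    then show ?case using eq by simp
  qed
  then show ?thesis using i by (cases i) (auto simp: start)
qed

lemma segment_length_le:
  assumes fin: "finite E" and s: "is_segment V E vs" "is_segment V E ws"
    and start: "vs ! 0 = ws ! 0" "vs ! 1 = ws ! 1"
  shows "length vs \<le> length ws"
proof (rule ccontr)
  assume long: "\<not> length vs \<le> length ws"
  moreover have "2 \<le> length ws" using s(2) by (simp add: is_segment_def)
  ultimately have "degree E (vs ! (length ws - 1)) = 2"
    using s(1) by (simp add: is_segment_def)
  moreover have "vs ! (length ws - 1) = last ws"
    using segments_agree[OF fin s start] \<open>2 \<le> length ws\<close> long
    by (subst last_conv_nth) auto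
  ultimately show False using s(2) by (simp add: is_segment_def)
qed

lemma segment_eqI:
  assumes "finite E" "is_segment V E vs" "is_segment V E ws" "vs ! 0 = ws ! 0" "vs ! 1 = ws ! 1"
  shows "vs = ws"
proof -
  have "length vs = length ws"
    using segment_length_le[OF assms] segment_length_le[OF assms(1,3,2) assms(4,5)[symmetric]] by simp
  then show ?thesis using segments_agree[OF assms] by (simp add: nth_equalityI)
qed

lemma is_segment_rev:
  assumes "is_segment V E vs"
  shows "is_segment V E (rev vs)"
proof -
  have "successively (adj E) vs" using assms by (simp add: is_segment_def is_path_def is_walk_iff_successively)
  then have "successively (\<lambda>x y. adj E y x) vs" by (rule successively_mono) (simp add: adj_commute)
  then have "is_path V E (rev vs)"
    using assms by (simp add: is_segment_def is_path_def is_walk_iff_successively)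
  moreover have "degree E (rev vs ! i) = 2" if "0 < i" "Suc i < length vs" for i
  proof -
    have "0 < length vs - Suc i" "Suc (length vs - Suc i) < length vs" using that by auto
    then show ?thesis using assms that by (simp add: is_segment_def rev_nth)
  qed
  ultimately show ?thesis using assms by (simp add: is_segment_def hd_rev last_rev)
qed

lemma path_edges_rev: "path_edges (rev vs) = path_edges vs"
proof -
  have "path_edges (rev xs) \<subseteq> path_edges xs" for xs :: "'a list"
  proof
    fix e assume "e \<in> path_edges (rev xs)"
    then obtain i where i: "e = {rev xs ! i, rev xs ! Suc i}" "Suc i < length xs"
      unfolding path_edges_def by auto
    define j where "j = length xs - Suc (Suc i)"
    have "Suc j < length xs" "e = {xs ! j, xs ! Suc j}"
      using i by (auto simp: j_def rev_nth Suc_diff_Suc insert_commute)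
    then show "e \<in> path_edges xs" unfolding path_edges_def by blast
  qed
  from this[of vs] this[of "rev vs"] show ?thesis by simp
qed

lemma segment_path_edges_eq:
  assumes fin: "finite E" and s: "is_segment V E vs" "is_segment V E ws"
    and pe: "path_edges ws = path_edges vs"
  shows "ws = vs \<or> ws = rev vs"
proof -
  have l: "2 \<le> length vs" "2 \<le> length ws" using s by (simp_all add: is_segment_def)
  note d = segment_start(4)[OF s(2)]
  have "{ws ! 0, ws ! 1} \<in> path_edges ws"
    unfolding path_edges_def using l(2) by (intro CollectI exI[of _ 0]) simp
  then have "{ws ! 0, ws ! 1} \<in> path_edges vs" using pe by simp
  then obtain i where i: "{ws ! 0, ws ! 1} = {vs ! i, vs ! Suc i}" "Suc i < length vs"
    unfolding path_edges_def by auto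
  then consider "ws ! 0 = vs ! i" "ws ! 1 = vs ! Suc i" | "ws ! 0 = vs ! Suc i" "ws ! 1 = vs ! i"
    by (auto simp: doubleton_eq_iff)
  then show ?thesis
  proof cases
    case 1
    then have "i = 0 \<or> i = length vs - 1"
      using segment_end_index[OF s(1) _ d[unfolded 1(1)]] i(2) by simp
    then have "i = 0" using i(2) by linarith
    then show ?thesis using segment_eqI[OF fin s(1,2)] 1 by simp
  next
    case 2
    then have "Suc i = 0 \<or> Suc i = length vs - 1"
      using segment_end_index[OF s(1) i(2) d[unfolded 2(1)]] by simp
    then have "length vs = Suc (Suc i)" using i(2) by linarith
    then have "rev vs ! 0 = ws ! 0" "rev vs ! 1 = ws ! 1" using 2 by (simp_all add: rev_nth)
    then show ?thesis using segment_eqI[OF fin is_segment_rev[OF s(1)] s(2)] by simp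
  qed
qed

lemma tree_segment_exists:
  assumes t: "is_tree V E" and v: "degree E v \<noteq> 2" and e: "{v, w} \<in> E"
  obtains vs where "is_segment V E vs" "vs ! 0 = v" "vs ! 1 = w"
proof -
  note sg = is_treeD(1)[OF t]
  define P where "P ws \<longleftrightarrow> 2 \<le> length ws \<and> ws ! 0 = v \<and> ws ! 1 = w \<and>
    (\<forall>i. 0 < i \<and> Suc i < length ws \<longrightarrow> degree E (ws ! i) = 2)" for ws
  have "P [v, w]" by (auto simp: P_def)
  then obtain vs where p: "is_path V E vs" and P: "P vs"
    and longest: "\<And>ws. is_path V E ws \<Longrightarrow> P ws \<Longrightarrow> length ws \<le> length vs"
    using longest_path_exists[OF is_treeD(2)[OF t] edge_path[OF sg e]] by blast
  have l: "2 \<le> length vs" using P by (simp add: P_def)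
  then have ne: "vs \<noteq> []" by auto
  \<comment> \<open>otherwise the path could be extended through its last vertex\<close>
  have "degree E (last vs) \<noteq> 2"
  proof
    assume deg: "degree E (last vs) = 2"
    define u where "u = vs ! (length vs - 2)"
    have "\<not> {e \<in> E. last vs \<in> e} \<subseteq> {{u, last vs}}"
    proof
      assume sub: "{e \<in> E. last vs \<in> e} \<subseteq> {{u, last vs}}"
      have "card {e \<in> E. last vs \<in> e} \<le> card {{u, last vs}}" by (rule card_mono[OF _ sub]) simp
      then show False using deg by (simp add: degree_def)
    qed
    then obtain e where e: "e \<in> E" "last vs \<in> e" "e \<noteq> {u, last vs}" by blast
    then obtain x where x: "e = {last vs, x}" using simple_graph_incident_edgeE[OF sg] by blast
    have "is_path V E (vs @ [x])"
      using tree_path_snoc[OF t p l] e x u_def by (auto simp: insert_commute)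
    moreover have "degree E ((vs @ [x]) ! i) = 2" if "0 < i" "Suc i < length (vs @ [x])" for i
    proof (cases "Suc i < length vs")
      case True
      then show ?thesis using P that by (simp add: P_def nth_append)
    next
      case False
      then have "i = length vs - 1" using that by simp
      then show ?thesis using deg ne by (simp add: nth_append last_conv_nth)
    qed
    then have "P (vs @ [x])" using P l ne by (simp add: P_def nth_append)
    ultimately show False using longest[of "vs @ [x]"] by simp
  qed
  then have "is_segment V E vs" using p P v ne by (simp add: is_segment_def P_def hd_conv_nth)
  then show ?thesis using P that by (simp add: P_def)
qed

lemma finite_segment_lists:
  assumes "finite V"
  shows "finite {vs. is_segment V E vs}"
  using finite_subset_distinct[OF assms]
  by (rule finite_subset[rotated]) (auto simp: is_segment_def is_path_def is_walk_def)

lemma card_segment_lists: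
  assumes t: "is_tree V E"
  shows "card {vs. is_segment V E vs} = (\<Sum>v\<in>{v \<in> V. degree E v \<noteq> 2}. degree E v)"
proof -
  let ?start = "\<lambda>vs. (vs ! 0, {vs ! 0, vs ! 1})"
  let ?D = "SIGMA v:{v \<in> V. degree E v \<noteq> 2}. {e \<in> E. v \<in> e}"
  have "bij_betw ?start {vs. is_segment V E vs} ?D"
  proof (rule bij_betwI')
    fix vs ws assume "vs \<in> {vs. is_segment V E vs}" "ws \<in> {vs. is_segment V E vs}"
    then have s: "is_segment V E vs" "is_segment V E ws" by simp_all
    show "?start vs = ?start ws \<longleftrightarrow> vs = ws"
    proof
      assume "?start vs = ?start ws"
      then have "vs ! 0 = ws ! 0" "vs ! 1 = ws ! 1"
        using segment_start(3)[OF s(1)] segment_start(3)[OF s(2)] by (auto simp: doubleton_eq_iff)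
      then show "vs = ws" using segment_eqI[OF is_treeD(3)[OF t] s] by simp
    qed simp
  next
    fix vs assume "vs \<in> {vs. is_segment V E vs}"
    then show "?start vs \<in> ?D" using segment_start[of V E vs] by simp
  next
    fix d assume "d \<in> ?D"
    then obtain v e where d: "d = (v, e)" "v \<in> V" "degree E v \<noteq> 2" "e \<in> E" "v \<in> e" by blast
    then obtain w where "e = {v, w}" using simple_graph_incident_edgeE[OF is_treeD(1)[OF t]] by blast
    then obtain vs where "is_segment V E vs" "vs ! 0 = v" "vs ! 1 = w"
      using tree_segment_exists[OF t d(3)] d(4) by blast
    then show "\<exists>vs \<in> {vs. is_segment V E vs}. d = ?start vs" using d(1) \<open>e = {v, w}\<close> by auto
  qed
  then have "card {vs. is_segment V E vs} = card ?D" by (rule bij_betw_same_card)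
  also have "\<dots> = (\<Sum>v\<in>{v \<in> V. degree E v \<noteq> 2}. degree E v)"
    using is_treeD(2,3)[OF t] by (simp add: degree_def)
  finally show ?thesis .
qed

lemma card_segment_lists_num_segments:
  assumes "finite V" "finite E"
  shows "card {vs. is_segment V E vs} = 2 * num_segments V E"
proof -
  let ?S = "{vs. is_segment V E vs}"
  have "card ?S = (\<Sum>P\<in>path_edges ` ?S. card {vs \<in> ?S. path_edges vs = P})"
    using sum.image_gen[OF finite_segment_lists[OF assms(1), of E],
        where h = "\<lambda>_. 1 :: nat" and g = path_edges]
    by simp
  also have "\<dots> = (\<Sum>P\<in>path_edges ` ?S. 2)"
  proof (rule sum.cong[OF refl])
    fix P assume "P \<in> path_edges ` ?S"
    then obtain vs where s: "is_segment V E vs" and P: "P = path_edges vs" by blast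
    have "{ws \<in> ?S. path_edges ws = P} = {vs, rev vs}"
      using segment_path_edges_eq[OF assms(2) s] is_segment_rev[OF s] path_edges_rev[of vs] s P
      by auto
    moreover have "rev vs \<noteq> vs"
    proof
      assume "rev vs = vs"
      then have "hd vs = last vs" by (metis hd_rev)
      moreover have l: "2 \<le> length vs" and "distinct vs"
        using s by (simp_all add: is_segment_def is_path_def)
      moreover from l have "vs \<noteq> []" by auto
      ultimately show False
        using nth_eq_iff_index_eq[of vs 0 "length vs - 1"] by (simp add: hd_conv_nth last_conv_nth)
    qed
    ultimately show "card {ws \<in> ?S. path_edges ws = P} = 2" by simp
  qed
  also have "\<dots> = 2 * card (path_edges ` ?S)" by simp
  also have "path_edges ` ?S = segments V E" unfolding segments_def by blast
  finally show ?thesis by (simp add: num_segments_def)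
qed

lemma tree_num_segments:
  assumes "is_tree V E"
  shows "2 * num_segments V E = (\<Sum>v\<in>{v \<in> V. degree E v \<noteq> 2}. degree E v)"
  using card_segment_lists[OF assms] card_segment_lists_num_segments[OF is_treeD(2,3)[OF assms]]
  by simp

section \<open>Degree counts\<close>

lemma chemical_degree_identities:
  fixes d :: "'a \<Rightarrow> nat"
  assumes fin: "finite V" and range: "\<And>v. v \<in> V \<Longrightarrow> 1 \<le> d v \<and> d v \<le> 4"
    and sum_d: "(\<Sum>v\<in>V. d v) + 2 = 2 * card V"
    and sum_k: "(\<Sum>v\<in>{v \<in> V. d v \<noteq> 2}. d v) = 2 * k"
  shows "k = 2 * card {v \<in> V. d v = 3} + 3 * card {v \<in> V. d v = 4} + 1"
    and "(\<Sum>v\<in>V. (d v)\<^sup>2) + 2 * card {v \<in> V. d v = 3} + 8 = 4 * card V + 2 * k"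
proof -
  have cases: "d v = 1 \<or> d v = 2 \<or> d v = 3 \<or> d v = 4" if "v \<in> V" for v
    using range[OF that] by presburger
  have "(\<Sum>v\<in>V. d v * of_bool (d v \<noteq> 2) + d v)
      = (\<Sum>v\<in>V. 2 + 4 * of_bool (d v = 3) + 6 * of_bool (d v = 4))"
    by (rule sum.cong[OF refl], drule cases) auto
  then have "2 * k + (\<Sum>v\<in>V. d v) = 2 * card V + 4 * card {v \<in> V. d v = 3} + 6 * card {v \<in> V. d v = 4}"
    using fin sum_k unfolding sum.distrib by (simp add: sum_distrib_left[symmetric] Collect_conj_eq)
  then show "k = 2 * card {v \<in> V. d v = 3} + 3 * card {v \<in> V. d v = 4} + 1"
    using sum_d by linarith
  have "(\<Sum>v\<in>V. (d v)\<^sup>2 + 2 * of_bool (d v = 3) + 4)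
      = (\<Sum>v\<in>V. d v * of_bool (d v \<noteq> 2) + 4 * d v)"
    by (rule sum.cong[OF refl], drule cases) auto
  then have "(\<Sum>v\<in>V. (d v)\<^sup>2) + 2 * card {v \<in> V. d v = 3} + 4 * card V = 2 * k + 4 * (\<Sum>v\<in>V. d v)"
    using fin sum_k unfolding sum.distrib by (simp add: sum_distrib_left[symmetric] Collect_conj_eq)
  then show "(\<Sum>v\<in>V. (d v)\<^sup>2) + 2 * card {v \<in> V. d v = 3} + 8 = 4 * card V + 2 * k"
    using sum_d by linarith
qed

lemma bound_by_residue_mod_3:
  fixes M n k c\<^sub>3 c\<^sub>4 :: nat
  assumes k: "k = 2 * c\<^sub>3 + 3 * c\<^sub>4 + 1" and M: "M + 2 * c\<^sub>3 + 8 = 4 * n + 2 * k"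
  shows "(k mod 3 = 0 \<longrightarrow>
            int M \<le> 4 * int n + 2 * int k - 10 \<and>
            (int M = 4 * int n + 2 * int k - 10 \<longleftrightarrow> c\<^sub>3 = 1)) \<and>
         (k mod 3 = 1 \<longrightarrow>
            int M \<le> 4 * int n + 2 * int k - 8 \<and>
            (int M = 4 * int n + 2 * int k - 8 \<longleftrightarrow> c\<^sub>3 = 0)) \<and>
         (k mod 3 = 2 \<longrightarrow>
            int M \<le> 4 * int n + 2 * int k - 12 \<and>
            (int M = 4 * int n + 2 * int k - 12 \<longleftrightarrow> c\<^sub>3 = 2))"
proof -
  have M': "int M = 4 * int n + 2 * int k - 8 - 2 * int c\<^sub>3" using M by linarith
  have "k mod 3 = 0 \<Longrightarrow> c\<^sub>3 mod 3 = 1" "k mod 3 = 2 \<Longrightarrow> c\<^sub>3 mod 3 = 2"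
    using k by presburger+
  then have "k mod 3 = 0 \<Longrightarrow> 1 \<le> c\<^sub>3" "k mod 3 = 2 \<Longrightarrow> 2 \<le> c\<^sub>3"
    using mod_less_eq_dividend[of c\<^sub>3 3] by linarith+
  then show ?thesis by (auto simp: M')
qed

theorem theorem1:
  fixes V :: "'a set" and E :: "'a set set" and n k :: nat
  assumes "chemical_tree V E"
    and "card V = n"
    and "num_segments V E = k"
    and "3 \<le> k" and "k \<le> n - 1"
  shows "(k mod 3 = 0 \<longrightarrow>
            int (M1 V E) \<le> 4 * int n + 2 * int k - 10 \<and>
            (int (M1 V E) = 4 * int n + 2 * int k - 10 \<longleftrightarrow> card {v \<in> V. degree E v = 3} = 1)) \<and>
         (k mod 3 = 1 \<longrightarrow>
            int (M1 V E) \<le> 4 * int n + 2 * int k - 8 \<and>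
            (int (M1 V E) = 4 * int n + 2 * int k - 8 \<longleftrightarrow> card {v \<in> V. degree E v = 3} = 0)) \<and>
         (k mod 3 = 2 \<longrightarrow>
            int (M1 V E) \<le> 4 * int n + 2 * int k - 12 \<and>
            (int (M1 V E) = 4 * int n + 2 * int k - 12 \<longleftrightarrow> card {v \<in> V. degree E v = 3} = 2))"
proof -
  have t: "is_tree V E" and le4: "\<forall>v\<in>V. degree E v \<le> 4"
    using assms(1) by (simp_all add: chemical_tree_def)
  have two: "2 \<le> card V" using assms(2,4,5) by linarith
  have range: "1 \<le> degree E v \<and> degree E v \<le> 4" if "v \<in> V" for v
    using tree_degree_pos[OF t two that] le4 that by simp
  have "(\<Sum>v\<in>V. degree E v) + 2 = 2 * card V"
    using degree_sum[OF is_treeD(1)[OF t]] tree_card_edges[OF t] two by simp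
  moreover have "(\<Sum>v\<in>{v \<in> V. degree E v \<noteq> 2}. degree E v) = 2 * k"
    using tree_num_segments[OF t] assms(3) by simp
  ultimately have "k = 2 * card {v \<in> V. degree E v = 3} + 3 * card {v \<in> V. degree E v = 4} + 1"
    and "M1 V E + 2 * card {v \<in> V. degree E v = 3} + 8 = 4 * n + 2 * k"
    using chemical_degree_identities[OF is_treeD(2)[OF t] range] assms(2) by (simp_all add: M1_def)
  then show ?thesis by (rule bound_by_residue_mod_3)
qed

end
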